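(* Let $X\in\mathbb{R}^{m\times n}$ be fixed, $V=\frac1nXX^\top$, $W^K,W^Q\in\mathbb{R}^{n\times n_k}$ and $W\in\mathbb{R}^{n\times n}$ independent with i.i.d. $\mathcal N(0,1)$ entries, $Y=\frac1nXW^KW^{Q,\top}X^\top$, $\tau>0$, $A=I+\mathrm{Softmax}(\tau^{-1}Y)-\frac1m\mathbf 1\mathbf 1^\top$ (Softmax row-wise), and $$\mathcal T_2^{\alpha\beta}=\frac1{n\sqrt n}\big(AXWW^\top X^\top A^\top\big)^{\alpha\beta}.$$ Then $$\mathbb{E}[\mathcal T_2^{\alpha\beta}]=\sqrt n\sum_{\nu,\kappa}V^{\nu\kappa}\,\mathbb{E}[A^{\alpha\nu}A^{\beta\kappa}],$$ $$\mathbb{E}[\mathcal T_2^{\alpha\beta}\mathcal T_2^{\delta\omega}]=\sum_{\nu,\kappa,\nu',\kappa'}\mathbb{E}[A^{\alpha\nu}A^{\beta\kappa}A^{\delta\nu'}A^{\omega\kappa'}]\big(nV^{\nu\kappa}V^{\nu'\kappa'}+V^{\nu\nu'}V^{\kappa\kappa'}+V^{\nu\kappa'}V^{\nu'\kappa}\big).$$ *)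

theory Defs
  imports "HOL-Probability.Probability"
begin

text \<open>Matrices are functions nat => nat => real; only indices below the stated
 dimensions are used. X is m x n; WK, WQ are n x nk; W is n x n.\<close>

definition Vmat :: "nat \<Rightarrow> (nat \<Rightarrow> nat \<Rightarrow> real) \<Rightarrow> nat \<Rightarrow> nat \<Rightarrow> real" where
  "Vmat n X a b = (1 / real n) * (\<Sum>i<n. X a i * X b i)"

definition Ymat :: "nat \<Rightarrow> nat \<Rightarrow> (nat \<Rightarrow> nat \<Rightarrow> real) \<Rightarrow> (nat \<Rightarrow> nat \<Rightarrow> real)
    \<Rightarrow> (nat \<Rightarrow> nat \<Rightarrow> real) \<Rightarrow> nat \<Rightarrow> nat \<Rightarrow> real" where
  "Ymat n nk X WK WQ a b =
     (1 / real n) * (\<Sum>i<n. \<Sum>j<n. \<Sum>k<nk. X a i * WK i k * WQ j k * X b j)"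

definition softmax_rows :: "nat \<Rightarrow> (nat \<Rightarrow> nat \<Rightarrow> real) \<Rightarrow> nat \<Rightarrow> nat \<Rightarrow> real" where
  "softmax_rows m Z a b = exp (Z a b) / (\<Sum>g<m. exp (Z a g))"

definition Amat :: "nat \<Rightarrow> nat \<Rightarrow> nat \<Rightarrow> real \<Rightarrow> (nat \<Rightarrow> nat \<Rightarrow> real) \<Rightarrow> (nat \<Rightarrow> nat \<Rightarrow> real)
    \<Rightarrow> (nat \<Rightarrow> nat \<Rightarrow> real) \<Rightarrow> nat \<Rightarrow> nat \<Rightarrow> real" where
  "Amat m n nk \<tau> X WK WQ a b =
     (if a = b then 1 else 0) + softmax_rows m (\<lambda>c d. Ymat n nk X WK WQ c d / \<tau>) a b - 1 / real m"

definition T2 :: "nat \<Rightarrow> nat \<Rightarrow> nat \<Rightarrow> real \<Rightarrow> (nat \<Rightarrow> nat \<Rightarrow> real) \<Rightarrow> (nat \<Rightarrow> nat \<Rightarrow> real)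
    \<Rightarrow> (nat \<Rightarrow> nat \<Rightarrow> real) \<Rightarrow> (nat \<Rightarrow> nat \<Rightarrow> real) \<Rightarrow> nat \<Rightarrow> nat \<Rightarrow> real" where
  "T2 m n nk \<tau> X WK WQ W a b =
     (1 / (real n * sqrt (real n))) *
     (\<Sum>\<nu><m. \<Sum>\<kappa><m. \<Sum>i<n. \<Sum>l<n. \<Sum>j<n.
        Amat m n nk \<tau> X WK WQ a \<nu> * X \<nu> i * W i j * W l j * X \<kappa> l
        * Amat m n nk \<tau> X WK WQ b \<kappa>)"

text \<open>All Gaussian entries as one family, labelled (c,i,j):
 c = 0 for W^K, c = 1 for W^Q, c = 2 for W.\<close>
definition gauss_entry :: "('a \<Rightarrow> nat \<Rightarrow> nat \<Rightarrow> real) \<Rightarrow> ('a \<Rightarrow> nat \<Rightarrow> nat \<Rightarrow> real)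
    \<Rightarrow> ('a \<Rightarrow> nat \<Rightarrow> nat \<Rightarrow> real) \<Rightarrow> nat \<times> nat \<times> nat \<Rightarrow> 'a \<Rightarrow> real" where
  "gauss_entry WK WQ W = (\<lambda>(c, i, j) \<omega>.
     if c = 0 then WK \<omega> i j else if c = 1 then WQ \<omega> i j else W \<omega> i j)"

definition gauss_index :: "nat \<Rightarrow> nat \<Rightarrow> (nat \<times> nat \<times> nat) set" where
  "gauss_index n nk = ({0::nat} \<times> {..<n} \<times> {..<nk}) \<union> ({1} \<times> {..<n} \<times> {..<nk})
      \<union> ({2} \<times> {..<n} \<times> {..<n})"

end

theory Submission
  imports Defs
begin

(* Write G = X W W^T X^T, so that T2 = (n sqrt n)^-1 A G A^T. The matrix A is a bounded function
   of W^K and W^Q only, hence independent of G, so every expectation factors into a moment of A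
   times a moment of G. The moments of G follow from Isserlis' theorem for the Gaussian entries of
   W: second moments are Kronecker deltas and fourth moments are sums of three pairings, and
   contracting the deltas against the rows of X gives E[G_ab] = n^2 V_ab and
   E[G_ab G_cd] = n^3 (n V_ab V_cd + V_ac V_bd + V_ad V_bc). *)

section \<open>Independence\<close>

lemma (in prob_space) indep_sets_reindex:
  assumes indep: "indep_sets F (f ` I)" and inj: "inj_on f I"
  shows "indep_sets (\<lambda>i. F (f i)) I"
proof (unfold indep_sets_def, intro conjI ballI allI impI)
  show "F (f i) \<subseteq> events" if "i \<in> I" for i
    using indep that by (auto simp: indep_sets_def)
next
  fix J A assume J: "J \<subseteq> I" "J \<noteq> {}" "finite J" and A: "A \<in> Pi J (\<lambda>i. F (f i))"
  define B where "B = A \<circ> the_inv_into J f"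
  have inj_J: "inj_on f J"
    using inj J(1) by (rule inj_on_subset)
  have B_f: "B (f j) = A j" if "j \<in> J" for j
    using the_inv_into_f_f[OF inj_J that] by (simp add: B_def)
  have "B \<in> Pi (f ` J) F"
    using A by (auto simp: B_f)
  then have "prob (\<Inter>j\<in>f ` J. B j) = (\<Prod>j\<in>f ` J. prob (B j))"
    using indep J unfolding indep_sets_def by (metis finite_imageI image_is_empty image_mono)
  then show "prob (\<Inter>j\<in>J. A j) = (\<Prod>j\<in>J. prob (A j))"
    by (simp add: prod.reindex[OF inj_J] B_f)
qed

lemma (in prob_space) indep_vars_reindex:
  assumes "indep_vars M' X (f ` I)" and "inj_on f I"
  shows "indep_vars (\<lambda>i. M' (f i)) (\<lambda>i. X (f i)) I"
  using assms indep_sets_reindex[of "\<lambda>i. {X i -` A \<inter> space M | A. A \<in> sets (M' i)}" f I]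
  by (auto simp: indep_vars_def2)

lemma (in prob_space) has_bochner_integral_indep_restrict_mult:
  fixes Z :: "'i \<Rightarrow> 'a \<Rightarrow> real" and F G :: "('i \<Rightarrow> real) \<Rightarrow> real"
  assumes indep: "indep_vars (\<lambda>_. borel) Z I" and "K \<inter> L = {}" "K \<subseteq> I" "L \<subseteq> I"
    and F: "F \<in> borel_measurable (PiM K (\<lambda>_. borel))" and F_bounded: "\<And>x. \<bar>F x\<bar> \<le> B"
    and G: "G \<in> borel_measurable (PiM L (\<lambda>_. borel))"
    and G_integral: "has_bochner_integral M (\<lambda>s. G (restrict (\<lambda>i. Z i s) L)) g"
  shows "has_bochner_integral M (\<lambda>s. F (restrict (\<lambda>i. Z i s) K) * G (restrict (\<lambda>i. Z i s) L))
    ((\<integral>s. F (restrict (\<lambda>i. Z i s) K) \<partial>M) * g)"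
proof -
  have "indep_var (PiM K (\<lambda>_. borel)) (\<lambda>s. restrict (\<lambda>i. Z i s) K)
      (PiM L (\<lambda>_. borel)) (\<lambda>s. restrict (\<lambda>i. Z i s) L)"
    using indep_var_restrict[OF indep] assms(2-4) .
  then have indep_FG: "indep_var borel (\<lambda>s. F (restrict (\<lambda>i. Z i s) K))
      borel (\<lambda>s. G (restrict (\<lambda>i. Z i s) L))"
    using indep_var_compose[OF _ F G] by (simp add: comp_def)
  have "integrable M (\<lambda>s. F (restrict (\<lambda>i. Z i s) K))"
    using indep_var_rv1[OF indep_FG] F_bounded by (intro integrable_const_bound[where B=B]) auto
  with indep_FG G_integral show ?thesis
    by (simp add: has_bochner_integral_iff indep_var_integrable indep_var_lebesgue_integral)
qed

section \<open>Moments of independent standard normal variables\<close>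

definition std_normal_moment :: "nat \<Rightarrow> real" where
  "std_normal_moment k = (\<integral>x. std_normal_density x * x ^ k \<partial>lborel)"

text \<open>In unary form, since that is how simp evaluates the counts in \<open>count_list\<close>.\<close>
lemma std_normal_moment_0_to_4:
  "std_normal_moment 0 = 1" "std_normal_moment (Suc 0) = 0"
  "std_normal_moment (Suc (Suc 0)) = 1" "std_normal_moment (Suc (Suc (Suc 0))) = 0"
  "std_normal_moment (Suc (Suc (Suc (Suc 0)))) = 3"
  using integral_std_normal_moment_even[of 0] integral_std_normal_moment_even[of 1]
    integral_std_normal_moment_even[of 2]
    integral_std_normal_moment_odd[of 0] integral_std_normal_moment_odd[of 1]
  by (simp_all add: std_normal_moment_def fact_numeral numeral_eq_Suc)

lemma prod_list_map_eq_prod_count: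
  "prod_list (map f xs) = (\<Prod>x\<in>set xs. f x ^ count_list xs x)"
  by (simp flip: prod_mset_prod_list add: image_prod_mset_multiplicity count_mset)

context prob_space
begin

lemma has_bochner_integral_indep_std_normal_prod_list:
  assumes indep: "indep_vars (\<lambda>_. borel) Z I"
    and std_normal: "\<And>i. i \<in> I \<Longrightarrow> distributed M lborel (Z i) std_normal_density"
    and "set is \<subseteq> I"
  shows "has_bochner_integral M (\<lambda>s. \<Prod>i\<leftarrow>is. Z i s)
    (\<Prod>i\<in>set is. std_normal_moment (count_list is i))"
proof -
  have indep_powers: "indep_vars (\<lambda>_. borel) (\<lambda>i s. Z i s ^ count_list is i) (set is)"
    by (rule indep_vars_compose2[OF indep_vars_subset[OF indep \<open>set is \<subseteq> I\<close>]]) auto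
  have "integrable M (\<lambda>s. Z i s ^ k)" and "(\<integral>s. Z i s ^ k \<partial>M) = std_normal_moment k"
    if "i \<in> set is" for i k
    using distributed_integrable[OF std_normal, of i "\<lambda>x. x ^ k"]
      distributed_integral[OF std_normal, of i "\<lambda>x. x ^ k"] integrable_std_normal_moment[of k]
      that \<open>set is \<subseteq> I\<close> by (auto simp: std_normal_moment_def)
  with indep_powers show ?thesis
    by (simp add: has_bochner_integral_iff prod_list_map_eq_prod_count indep_vars_integrable
        indep_vars_lebesgue_integral)
qed

lemma has_bochner_integral_indep_std_normal_mult:
  assumes "indep_vars (\<lambda>_. borel) Z I"
    and "\<And>i. i \<in> I \<Longrightarrow> distributed M lborel (Z i) std_normal_density"
    and "a \<in> I" "b \<in> I"
  shows "has_bochner_integral M (\<lambda>s. Z a s * Z b s) (if a = b then 1 else 0)"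
  using has_bochner_integral_indep_std_normal_prod_list[OF assms(1,2), of "[a, b]"] assms(3,4)
  by (auto simp: std_normal_moment_0_to_4)

lemma has_bochner_integral_indep_std_normal_mult4:
  assumes "indep_vars (\<lambda>_. borel) Z I"
    and "\<And>i. i \<in> I \<Longrightarrow> distributed M lborel (Z i) std_normal_density"
    and "a \<in> I" "b \<in> I" "c \<in> I" "d \<in> I"
  shows "has_bochner_integral M (\<lambda>s. Z a s * Z b s * Z c s * Z d s)
    ((if a = b \<and> c = d then 1 else 0) + (if a = c \<and> b = d then 1 else 0)
      + (if a = d \<and> b = c then 1 else 0))"
  using has_bochner_integral_indep_std_normal_prod_list[OF assms(1,2), of "[a, b, c, d]"] assms(3-6)
  by (cases "a = b"; cases "a = c"; cases "a = d"; cases "b = c"; cases "b = d"; cases "c = d")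
    (auto simp: std_normal_moment_0_to_4 insert_commute mult.assoc)

end

section \<open>The Gram matrix of X W for a standard Gaussian matrix W\<close>

lemma mult_if_0_right: "(a::'a::mult_zero) * (if P then b else 0) = (if P then a * b else 0)"
  by simp

lemma mult_if_0_left: "(if P then b else 0) * (a::'a::mult_zero) = (if P then b * a else 0)"
  by simp

lemma sum_if_0_const: "(\<Sum>x\<in>A. if P then f x else 0) = (if P then sum f A else 0)"
  by simp

lemmas kronecker_delta_simps = if_if_eq_conj[symmetric] mult_if_0_right mult_if_0_left
  sum_if_0_const sum.delta sum.delta' sum_distrib_left sum_distrib_right

definition gram_XW :: "nat \<Rightarrow> nat \<Rightarrow> (nat \<Rightarrow> nat \<Rightarrow> real) \<Rightarrow> (nat \<Rightarrow> nat \<Rightarrow> real)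
    \<Rightarrow> nat \<Rightarrow> nat \<Rightarrow> real" where
  "gram_XW n p X W a b = (\<Sum>i<n. \<Sum>l<n. \<Sum>j<p. X a i * X b l * (W i j * W l j))"

lemma gram_XW_cong:
  assumes "\<And>i j. i < n \<Longrightarrow> j < p \<Longrightarrow> W i j = W' i j"
  shows "gram_XW n p X W = gram_XW n p X W'"
  using assms by (auto simp: fun_eq_iff gram_XW_def intro!: sum.cong)

locale std_gaussian_matrix = prob_space +
  fixes W :: "'a \<Rightarrow> nat \<Rightarrow> nat \<Rightarrow> real" and n p :: nat
  assumes indep_entries: "indep_vars (\<lambda>_. borel) (\<lambda>(i, j) s. W s i j) ({..<n} \<times> {..<p})"
    and std_normal_entries:
      "\<And>i j. i < n \<Longrightarrow> j < p \<Longrightarrow> distributed M lborel (\<lambda>s. W s i j) std_normal_density"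
begin

lemma std_normal_entry_family:
  "e \<in> {..<n} \<times> {..<p} \<Longrightarrow> distributed M lborel ((\<lambda>(i, j) s. W s i j) e) std_normal_density"
  using std_normal_entries by auto

lemma has_bochner_integral_entry_mult:
  assumes "i < n" "l < n" "j < p"
  shows "has_bochner_integral M (\<lambda>s. W s i j * W s l j) (if i = l then 1 else 0)"
  using has_bochner_integral_indep_std_normal_mult[OF indep_entries std_normal_entry_family,
      of "(i, j)" "(l, j)"] assms
  by simp

lemma has_bochner_integral_entry_mult4:
  assumes "i < n" "l < n" "i' < n" "l' < n" "j < p" "j' < p"
  shows "has_bochner_integral M (\<lambda>s. W s i j * W s l j * W s i' j' * W s l' j')
    ((if i = l \<and> i' = l' then 1 else 0) + (if i = i' \<and> j = j' \<and> l = l' then 1 else 0)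
      + (if i = l' \<and> j = j' \<and> l = i' then 1 else 0))"
proof -
  have "has_bochner_integral M (\<lambda>s. W s i j * W s l j * W s i' j' * W s l' j')
    ((if (i, j) = (l, j) \<and> (i', j') = (l', j') then 1 else 0)
      + (if (i, j) = (i', j') \<and> (l, j) = (l', j') then 1 else 0)
      + (if (i, j) = (l', j') \<and> (l, j) = (i', j') then 1 else 0))"
    using has_bochner_integral_indep_std_normal_mult4[OF indep_entries std_normal_entry_family,
      of "(i, j)" "(l, j)" "(i', j')" "(l', j')"] assms
    by (simp only: lessThan_iff mem_Times_iff fst_conv snd_conv case_prod_conv simp_thms)
  moreover have "((i, j) = (l, j) \<and> (i', j') = (l', j')) \<longleftrightarrow> i = l \<and> i' = l'"
    and "((i, j) = (i', j') \<and> (l, j) = (l', j')) \<longleftrightarrow> i = i' \<and> j = j' \<and> l = l'"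
    and "((i, j) = (l', j') \<and> (l, j) = (i', j')) \<longleftrightarrow> i = l' \<and> j = j' \<and> l = i'"
    by auto
  ultimately show ?thesis
    by (simp only:)
qed

lemma has_bochner_integral_gram_XW:
  "has_bochner_integral M (\<lambda>s. gram_XW n p X (W s) a b) (real p * (\<Sum>i<n. X a i * X b i))"
proof -
  have "has_bochner_integral M (\<lambda>s. gram_XW n p X (W s) a b)
      (\<Sum>i<n. \<Sum>l<n. \<Sum>j<p. X a i * X b l * (if i = l then 1 else 0))"
    unfolding gram_XW_def
    by (intro has_bochner_integral_sum has_bochner_integral_mult_right has_bochner_integral_entry_mult)
      auto
  also have "(\<Sum>i<n. \<Sum>l<n. \<Sum>j<p. X a i * X b l * (if i = l then 1 else 0)) =
      real p * (\<Sum>i<n. X a i * X b i)"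
    by (simp add: kronecker_delta_simps mult.commute cong: if_cong)
  finally show ?thesis .
qed

lemma has_bochner_integral_gram_XW_mult:
  "has_bochner_integral M (\<lambda>s. gram_XW n p X (W s) a b * gram_XW n p X (W s) c d)
    (real p ^ 2 * (\<Sum>i<n. X a i * X b i) * (\<Sum>i<n. X c i * X d i)
      + real p * (\<Sum>i<n. X a i * X c i) * (\<Sum>i<n. X b i * X d i)
      + real p * (\<Sum>i<n. X a i * X d i) * (\<Sum>i<n. X c i * X b i))"
proof -
  let ?x = "\<lambda>i l i' l'. X a i * X b l * X c i' * X d l'"
  have expand: "gram_XW n p X V a b * gram_XW n p X V c d =
      (\<Sum>i<n. \<Sum>l<n. \<Sum>j<p. \<Sum>i'<n. \<Sum>l'<n. \<Sum>j'<p.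
        ?x i l i' l' * (V i j * V l j * V i' j' * V l' j'))" for V
    unfolding gram_XW_def sum_distrib_right unfolding sum_distrib_left
    by (intro sum.cong refl) (simp only: mult_ac)
  have pairing_ab_cd: "(\<Sum>i<n. \<Sum>l<n. \<Sum>j<p. \<Sum>i'<n. \<Sum>l'<n. \<Sum>j'<p.
      ?x i l i' l' * (if i = l \<and> i' = l' then 1 else 0)) =
      real p ^ 2 * (\<Sum>i<n. X a i * X b i) * (\<Sum>i<n. X c i * X d i)"
    by (simp add: kronecker_delta_simps power2_eq_square cong: if_cong)
      (subst sum.swap, simp add: mult_ac)
  have pairing_ac_bd: "(\<Sum>i<n. \<Sum>l<n. \<Sum>j<p. \<Sum>i'<n. \<Sum>l'<n. \<Sum>j'<p.
      ?x i l i' l' * (if i = i' \<and> j = j' \<and> l = l' then 1 else 0)) =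
      real p * (\<Sum>i<n. X a i * X c i) * (\<Sum>i<n. X b i * X d i)"
    by (simp add: kronecker_delta_simps cong: if_cong) (subst sum.swap, simp add: mult_ac)
  have pairing_ad_bc: "(\<Sum>i<n. \<Sum>l<n. \<Sum>j<p. \<Sum>i'<n. \<Sum>l'<n. \<Sum>j'<p.
      ?x i l i' l' * (if i = l' \<and> j = j' \<and> l = i' then 1 else 0)) =
      real p * (\<Sum>i<n. X a i * X d i) * (\<Sum>i<n. X c i * X b i)"
    by (simp add: kronecker_delta_simps cong: if_cong) (subst sum.swap, simp add: mult_ac)
  have "has_bochner_integral M (\<lambda>s. gram_XW n p X (W s) a b * gram_XW n p X (W s) c d)
      (\<Sum>i<n. \<Sum>l<n. \<Sum>j<p. \<Sum>i'<n. \<Sum>l'<n. \<Sum>j'<p. ?x i l i' l' *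
        ((if i = l \<and> i' = l' then 1 else 0) + (if i = i' \<and> j = j' \<and> l = l' then 1 else 0)
          + (if i = l' \<and> j = j' \<and> l = i' then 1 else 0)))"
    unfolding expand
    by (intro has_bochner_integral_sum has_bochner_integral_mult_right
        has_bochner_integral_entry_mult4) auto
  also have "\<dots> = real p ^ 2 * (\<Sum>i<n. X a i * X b i) * (\<Sum>i<n. X c i * X d i)
      + real p * (\<Sum>i<n. X a i * X c i) * (\<Sum>i<n. X b i * X d i)
      + real p * (\<Sum>i<n. X a i * X d i) * (\<Sum>i<n. X c i * X b i)"
    by (simp only: distrib_left sum.distrib pairing_ab_cd pairing_ac_bd pairing_ad_bc)
  finally show ?thesis .
qed

end

section \<open>The attention matrix\<close>

lemma softmax_rows_nonneg: "0 \<le> softmax_rows m Z a b"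
  by (simp add: softmax_rows_def sum_nonneg)

lemma softmax_rows_le_1:
  assumes "b < m"
  shows "softmax_rows m Z a b \<le> 1"
proof -
  have "exp (Z a b) \<le> (\<Sum>g<m. exp (Z a g))"
    using assms by (intro member_le_sum) auto
  moreover from this have "0 < (\<Sum>g<m. exp (Z a g))"
    by (rule less_le_trans[OF exp_gt_zero])
  ultimately show ?thesis
    by (simp add: softmax_rows_def)
qed

lemma abs_Amat_le:
  assumes "b < m"
  shows "\<bar>Amat m n nk \<tau> X WK WQ a b\<bar> \<le> 3"
proof -
  define S where "S = softmax_rows m (\<lambda>c d. Ymat n nk X WK WQ c d / \<tau>) a b"
  define t where "t = 1 / real m"
  have "0 \<le> S" "S \<le> 1" "0 \<le> t" "t \<le> 1"
    using softmax_rows_nonneg softmax_rows_le_1[OF assms] assms by (simp_all add: S_def t_def)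
  then show ?thesis
    unfolding Amat_def S_def[symmetric] t_def[symmetric] by (auto simp: abs_le_iff)
qed

lemma Amat_cong:
  assumes "\<And>i k. i < n \<Longrightarrow> k < nk \<Longrightarrow> WK i k = WK' i k"
    and "\<And>i k. i < n \<Longrightarrow> k < nk \<Longrightarrow> WQ i k = WQ' i k"
  shows "Amat m n nk \<tau> X WK WQ = Amat m n nk \<tau> X WK' WQ'"
proof -
  have "Ymat n nk X WK WQ = Ymat n nk X WK' WQ'"
    using assms by (auto simp: fun_eq_iff Ymat_def intro!: sum.cong arg_cong[where f="\<lambda>x. _ * x"])
  then show ?thesis
    by (simp add: fun_eq_iff Amat_def)
qed

definition key_query_index :: "nat \<Rightarrow> nat \<Rightarrow> (nat \<times> nat \<times> nat) set" where
  "key_query_index n nk = {0, 1} \<times> {..<n} \<times> {..<nk}"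

definition value_index :: "nat \<Rightarrow> (nat \<times> nat \<times> nat) set" where
  "value_index n = {2} \<times> {..<n} \<times> {..<n}"

lemma measurable_Amat_key_query[measurable]:
  "(\<lambda>x. Amat m n nk \<tau> X (\<lambda>i k. x (0, i, k)) (\<lambda>i k. x (1, i, k)) a b)
    \<in> borel_measurable (PiM (key_query_index n nk) (\<lambda>_. borel))"
proof -
  have [measurable]: "(\<lambda>x. Ymat n nk X (\<lambda>i k. x (0, i, k)) (\<lambda>i k. x (1, i, k)) a b)
      \<in> borel_measurable (PiM (key_query_index n nk) (\<lambda>_. borel))" for a b
    unfolding Ymat_def
    by (intro borel_measurable_times borel_measurable_sum measurable_const
        measurable_component_singleton) (auto simp: key_query_index_def)
  show ?thesis
    unfolding Amat_def softmax_rows_def by measurable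
qed

lemma measurable_gram_XW_value[measurable]:
  "(\<lambda>y. gram_XW n n X (\<lambda>i j. y (2, i, j)) a b)
    \<in> borel_measurable (PiM (value_index n) (\<lambda>_. borel))"
  unfolding gram_XW_def
  by (intro borel_measurable_times borel_measurable_sum measurable_const
      measurable_component_singleton) (auto simp: value_index_def)

lemma T2_eq_sum_gram_XW:
  "T2 m n nk \<tau> X WK WQ W a b = 1 / (real n * sqrt (real n)) *
    (\<Sum>\<nu><m. \<Sum>\<kappa><m. Amat m n nk \<tau> X WK WQ a \<nu> * Amat m n nk \<tau> X WK WQ b \<kappa>
      * gram_XW n n X W \<nu> \<kappa>)"
  unfolding T2_def gram_XW_def sum_distrib_left
  by (intro sum.cong refl) (simp only: mult_ac)

lemma T2_mult_T2_eq_sum_gram_XW: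
  "T2 m n nk \<tau> X WK WQ W a b * T2 m n nk \<tau> X WK WQ W c d = (1 / (real n * sqrt (real n)))\<^sup>2 *
    (\<Sum>\<nu><m. \<Sum>\<kappa><m. \<Sum>\<nu>'<m. \<Sum>\<kappa>'<m.
      Amat m n nk \<tau> X WK WQ a \<nu> * Amat m n nk \<tau> X WK WQ b \<kappa>
      * Amat m n nk \<tau> X WK WQ c \<nu>' * Amat m n nk \<tau> X WK WQ d \<kappa>'
      * (gram_XW n n X W \<nu> \<kappa> * gram_XW n n X W \<nu>' \<kappa>'))"
proof -
  let ?A = "Amat m n nk \<tau> X WK WQ" and ?G = "gram_XW n n X W"
  have "T2 m n nk \<tau> X WK WQ W a b * T2 m n nk \<tau> X WK WQ W c d =
      (1 / (real n * sqrt (real n)))\<^sup>2 * ((\<Sum>\<nu><m. \<Sum>\<kappa><m. ?A a \<nu> * ?A b \<kappa> * ?G \<nu> \<kappa>)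
        * (\<Sum>\<nu>'<m. \<Sum>\<kappa>'<m. ?A c \<nu>' * ?A d \<kappa>' * ?G \<nu>' \<kappa>'))"
    unfolding T2_eq_sum_gram_XW power2_eq_square by (simp only: mult_ac)
  also have "(\<Sum>\<nu><m. \<Sum>\<kappa><m. ?A a \<nu> * ?A b \<kappa> * ?G \<nu> \<kappa>)
      * (\<Sum>\<nu>'<m. \<Sum>\<kappa>'<m. ?A c \<nu>' * ?A d \<kappa>' * ?G \<nu>' \<kappa>') =
      (\<Sum>\<nu><m. \<Sum>\<kappa><m. \<Sum>\<nu>'<m. \<Sum>\<kappa>'<m.
        ?A a \<nu> * ?A b \<kappa> * ?A c \<nu>' * ?A d \<kappa>' * (?G \<nu> \<kappa> * ?G \<nu>' \<kappa>'))"
    unfolding sum_distrib_right unfolding sum_distrib_left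
    by (intro sum.cong refl) (simp only: mult_ac)
  finally show ?thesis .
qed

lemma sum_mult_rows_eq_Vmat: "(\<Sum>i<n. X a i * X b i) = real n * Vmat n X a b"
  by (cases "n = 0") (simp_all add: Vmat_def)

section \<open>Moments of T2\<close>

locale gaussian_attention = prob_space +
  fixes WK WQ W :: "'a \<Rightarrow> nat \<Rightarrow> nat \<Rightarrow> real" and n nk :: nat
  assumes indep_gauss_entries: "indep_vars (\<lambda>_. borel) (gauss_entry WK WQ W) (gauss_index n nk)"
    and std_normal_gauss_entries:
      "\<And>e. e \<in> gauss_index n nk \<Longrightarrow> distributed M lborel (gauss_entry WK WQ W e) std_normal_density"
begin

sublocale value_matrix: std_gaussian_matrix M W n n
proof
  have "indep_vars (\<lambda>_. borel) (gauss_entry WK WQ W) ((\<lambda>(i, j). (2, i, j)) ` ({..<n} \<times> {..<n}))"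
    by (rule indep_vars_subset[OF indep_gauss_entries]) (auto simp: gauss_index_def)
  from indep_vars_reindex[OF this]
  show "indep_vars (\<lambda>_. borel) (\<lambda>(i, j) s. W s i j) ({..<n} \<times> {..<n})"
    by (rule indep_vars_cong[THEN iffD1, rotated 3]) (auto simp: inj_on_def gauss_entry_def)
  show "distributed M lborel (\<lambda>s. W s i j) std_normal_density" if "i < n" "j < n" for i j
    using std_normal_gauss_entries[of "(2, i, j)"] that by (simp add: gauss_index_def gauss_entry_def)
qed

lemma has_bochner_integral_key_query_mult_value:
  fixes F :: "(nat \<Rightarrow> nat \<Rightarrow> real) \<Rightarrow> (nat \<Rightarrow> nat \<Rightarrow> real) \<Rightarrow> real"
    and G :: "(nat \<Rightarrow> nat \<Rightarrow> real) \<Rightarrow> real"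
  assumes F_measurable: "(\<lambda>x. F (\<lambda>i k. x (0, i, k)) (\<lambda>i k. x (1, i, k)))
      \<in> borel_measurable (PiM (key_query_index n nk) (\<lambda>_. borel))"
    and F_local: "\<And>U V U' V'. (\<And>i k. i < n \<Longrightarrow> k < nk \<Longrightarrow> U i k = U' i k) \<Longrightarrow>
      (\<And>i k. i < n \<Longrightarrow> k < nk \<Longrightarrow> V i k = V' i k) \<Longrightarrow> F U V = F U' V'"
    and F_bounded: "\<And>U V. \<bar>F U V\<bar> \<le> B"
    and G_measurable: "(\<lambda>y. G (\<lambda>i j. y (2, i, j)))
      \<in> borel_measurable (PiM (value_index n) (\<lambda>_. borel))"
    and G_local: "\<And>V V'. (\<And>i j. i < n \<Longrightarrow> j < n \<Longrightarrow> V i j = V' i j) \<Longrightarrow> G V = G V'"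
    and G_integral: "has_bochner_integral M (\<lambda>s. G (W s)) g"
  shows "has_bochner_integral M (\<lambda>s. F (WK s) (WQ s) * G (W s))
    ((\<integral>s. F (WK s) (WQ s) \<partial>M) * g)"
proof -
  let ?KQ = "\<lambda>s. restrict (\<lambda>e. gauss_entry WK WQ W e s) (key_query_index n nk)"
  let ?V = "\<lambda>s. restrict (\<lambda>e. gauss_entry WK WQ W e s) (value_index n)"
  have F_eq: "F (\<lambda>i k. ?KQ s (0, i, k)) (\<lambda>i k. ?KQ s (1, i, k)) = F (WK s) (WQ s)" for s
    by (rule F_local) (simp_all add: key_query_index_def gauss_entry_def)
  have G_eq: "G (\<lambda>i j. ?V s (2, i, j)) = G (W s)" for s
    by (rule G_local) (simp add: value_index_def gauss_entry_def)
  have G_integral': "has_bochner_integral M (\<lambda>s. G (\<lambda>i j. ?V s (2, i, j))) g"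
    unfolding G_eq by (rule G_integral)
  have "has_bochner_integral M
      (\<lambda>s. F (\<lambda>i k. ?KQ s (0, i, k)) (\<lambda>i k. ?KQ s (1, i, k)) * G (\<lambda>i j. ?V s (2, i, j)))
      ((\<integral>s. F (\<lambda>i k. ?KQ s (0, i, k)) (\<lambda>i k. ?KQ s (1, i, k)) \<partial>M) * g)"
    by (rule has_bochner_integral_indep_restrict_mult[OF indep_gauss_entries _ _ _
          F_measurable F_bounded G_measurable G_integral'])
      (auto simp: key_query_index_def value_index_def gauss_index_def)
  then show ?thesis
    by (simp only: F_eq G_eq)
qed
lemma has_bochner_integral_Amat_mult_gram_XW:
  assumes "\<nu> < m" "\<kappa> < m"
  shows "has_bochner_integral M
    (\<lambda>s. Amat m n nk \<tau> X (WK s) (WQ s) a \<nu> * Amat m n nk \<tau> X (WK s) (WQ s) b \<kappa>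
      * gram_XW n n X (W s) \<nu> \<kappa>)
    ((\<integral>s. Amat m n nk \<tau> X (WK s) (WQ s) a \<nu> * Amat m n nk \<tau> X (WK s) (WQ s) b \<kappa> \<partial>M)
      * (real n * (\<Sum>i<n. X \<nu> i * X \<kappa> i)))"
proof (rule has_bochner_integral_key_query_mult_value)
  show "\<bar>Amat m n nk \<tau> X U V a \<nu> * Amat m n nk \<tau> X U V b \<kappa>\<bar> \<le> 3 * 3" for U V
    unfolding abs_mult using assms by (intro mult_mono abs_Amat_le) auto
  show "Amat m n nk \<tau> X U V a \<nu> * Amat m n nk \<tau> X U V b \<kappa> =
      Amat m n nk \<tau> X U' V' a \<nu> * Amat m n nk \<tau> X U' V' b \<kappa>"
    if "\<And>i k. i < n \<Longrightarrow> k < nk \<Longrightarrow> U i k = U' i k"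
      and "\<And>i k. i < n \<Longrightarrow> k < nk \<Longrightarrow> V i k = V' i k"
    for U V U' V'
    using Amat_cong[OF that] by simp
  show "gram_XW n n X V \<nu> \<kappa> = gram_XW n n X V' \<nu> \<kappa>"
    if "\<And>i j. i < n \<Longrightarrow> j < n \<Longrightarrow> V i j = V' i j" for V V'
    using gram_XW_cong[OF that] by simp
qed (measurable, rule value_matrix.has_bochner_integral_gram_XW)

lemma has_bochner_integral_Amat_mult4_gram_XW_mult:
  assumes "\<nu> < m" "\<kappa> < m" "\<nu>' < m" "\<kappa>' < m"
  shows "has_bochner_integral M
    (\<lambda>s. Amat m n nk \<tau> X (WK s) (WQ s) a \<nu> * Amat m n nk \<tau> X (WK s) (WQ s) b \<kappa>
      * Amat m n nk \<tau> X (WK s) (WQ s) c \<nu>' * Amat m n nk \<tau> X (WK s) (WQ s) d \<kappa>'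
      * (gram_XW n n X (W s) \<nu> \<kappa> * gram_XW n n X (W s) \<nu>' \<kappa>'))
    ((\<integral>s. Amat m n nk \<tau> X (WK s) (WQ s) a \<nu> * Amat m n nk \<tau> X (WK s) (WQ s) b \<kappa>
      * Amat m n nk \<tau> X (WK s) (WQ s) c \<nu>' * Amat m n nk \<tau> X (WK s) (WQ s) d \<kappa>' \<partial>M)
      * (real n ^ 2 * (\<Sum>i<n. X \<nu> i * X \<kappa> i) * (\<Sum>i<n. X \<nu>' i * X \<kappa>' i)
        + real n * (\<Sum>i<n. X \<nu> i * X \<nu>' i) * (\<Sum>i<n. X \<kappa> i * X \<kappa>' i)
        + real n * (\<Sum>i<n. X \<nu> i * X \<kappa>' i) * (\<Sum>i<n. X \<nu>' i * X \<kappa> i)))"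
proof (rule has_bochner_integral_key_query_mult_value)
  show "\<bar>Amat m n nk \<tau> X U V a \<nu> * Amat m n nk \<tau> X U V b \<kappa>
      * Amat m n nk \<tau> X U V c \<nu>' * Amat m n nk \<tau> X U V d \<kappa>'\<bar> \<le> 3 * 3 * 3 * 3" for U V
    unfolding abs_mult using assms by (intro mult_mono abs_Amat_le) auto
  show "Amat m n nk \<tau> X U V a \<nu> * Amat m n nk \<tau> X U V b \<kappa>
      * Amat m n nk \<tau> X U V c \<nu>' * Amat m n nk \<tau> X U V d \<kappa>' =
      Amat m n nk \<tau> X U' V' a \<nu> * Amat m n nk \<tau> X U' V' b \<kappa>
      * Amat m n nk \<tau> X U' V' c \<nu>' * Amat m n nk \<tau> X U' V' d \<kappa>'"
    if "\<And>i k. i < n \<Longrightarrow> k < nk \<Longrightarrow> U i k = U' i k"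
      and "\<And>i k. i < n \<Longrightarrow> k < nk \<Longrightarrow> V i k = V' i k"
    for U V U' V'
    using Amat_cong[OF that] by simp
  show "gram_XW n n X V \<nu> \<kappa> * gram_XW n n X V \<nu>' \<kappa>' = gram_XW n n X V' \<nu> \<kappa> * gram_XW n n X V' \<nu>' \<kappa>'"
    if "\<And>i j. i < n \<Longrightarrow> j < n \<Longrightarrow> V i j = V' i j" for V V'
    using gram_XW_cong[OF that] by simp
qed (measurable, rule value_matrix.has_bochner_integral_gram_XW_mult)

lemma integral_T2:
  "(\<integral>s. T2 m n nk \<tau> X (WK s) (WQ s) (W s) \<alpha> \<beta> \<partial>M) =
    sqrt (real n) * (\<Sum>\<nu><m. \<Sum>\<kappa><m. Vmat n X \<nu> \<kappa> *
      (\<integral>s. Amat m n nk \<tau> X (WK s) (WQ s) \<alpha> \<nu> * Amat m n nk \<tau> X (WK s) (WQ s) \<beta> \<kappa> \<partial>M))"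
proof -
  let ?EA = "\<lambda>\<nu> \<kappa>.
    \<integral>s. Amat m n nk \<tau> X (WK s) (WQ s) \<alpha> \<nu> * Amat m n nk \<tau> X (WK s) (WQ s) \<beta> \<kappa> \<partial>M"
  have "has_bochner_integral M (\<lambda>s. T2 m n nk \<tau> X (WK s) (WQ s) (W s) \<alpha> \<beta>)
      (1 / (real n * sqrt (real n)) *
        (\<Sum>\<nu><m. \<Sum>\<kappa><m. ?EA \<nu> \<kappa> * (real n * (\<Sum>i<n. X \<nu> i * X \<kappa> i))))"
    unfolding T2_eq_sum_gram_XW
    by (intro has_bochner_integral_mult_right has_bochner_integral_sum
        has_bochner_integral_Amat_mult_gram_XW) auto
  also have "1 / (real n * sqrt (real n)) *
        (\<Sum>\<nu><m. \<Sum>\<kappa><m. ?EA \<nu> \<kappa> * (real n * (\<Sum>i<n. X \<nu> i * X \<kappa> i))) =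
      sqrt (real n) * (\<Sum>\<nu><m. \<Sum>\<kappa><m. Vmat n X \<nu> \<kappa> * ?EA \<nu> \<kappa>)"
  proof -
    have "1 / (real n * sqrt (real n)) * (e * (real n * (real n * v))) = sqrt (real n) * (v * e)"
      for e v
      by (cases "n = 0") (simp_all add: field_simps real_div_sqrt)
    then show ?thesis
      unfolding sum_distrib_left sum_mult_rows_eq_Vmat by simp
  qed
  finally show ?thesis
    by (simp add: has_bochner_integral_iff)
qed

lemma integral_T2_mult:
  "(\<integral>s. T2 m n nk \<tau> X (WK s) (WQ s) (W s) \<alpha> \<beta> * T2 m n nk \<tau> X (WK s) (WQ s) (W s) \<delta> \<omega> \<partial>M) =
    (\<Sum>\<nu><m. \<Sum>\<kappa><m. \<Sum>\<nu>'<m. \<Sum>\<kappa>'<m.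
      (\<integral>s. Amat m n nk \<tau> X (WK s) (WQ s) \<alpha> \<nu> * Amat m n nk \<tau> X (WK s) (WQ s) \<beta> \<kappa>
        * Amat m n nk \<tau> X (WK s) (WQ s) \<delta> \<nu>' * Amat m n nk \<tau> X (WK s) (WQ s) \<omega> \<kappa>' \<partial>M)
      * (real n * Vmat n X \<nu> \<kappa> * Vmat n X \<nu>' \<kappa>'
        + Vmat n X \<nu> \<nu>' * Vmat n X \<kappa> \<kappa>' + Vmat n X \<nu> \<kappa>' * Vmat n X \<nu>' \<kappa>))"
proof -
  let ?EA = "\<lambda>\<nu> \<kappa> \<nu>' \<kappa>'.
    \<integral>s. Amat m n nk \<tau> X (WK s) (WQ s) \<alpha> \<nu> * Amat m n nk \<tau> X (WK s) (WQ s) \<beta> \<kappa>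
        * Amat m n nk \<tau> X (WK s) (WQ s) \<delta> \<nu>' * Amat m n nk \<tau> X (WK s) (WQ s) \<omega> \<kappa>' \<partial>M"
  let ?S = "\<lambda>a b. \<Sum>i<n. X a i * X b i"
  have "has_bochner_integral M
      (\<lambda>s. T2 m n nk \<tau> X (WK s) (WQ s) (W s) \<alpha> \<beta> * T2 m n nk \<tau> X (WK s) (WQ s) (W s) \<delta> \<omega>)
      ((1 / (real n * sqrt (real n)))\<^sup>2 * (\<Sum>\<nu><m. \<Sum>\<kappa><m. \<Sum>\<nu>'<m. \<Sum>\<kappa>'<m. ?EA \<nu> \<kappa> \<nu>' \<kappa>' *
        (real n ^ 2 * ?S \<nu> \<kappa> * ?S \<nu>' \<kappa>' + real n * ?S \<nu> \<nu>' * ?S \<kappa> \<kappa>'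
          + real n * ?S \<nu> \<kappa>' * ?S \<nu>' \<kappa>)))"
    unfolding T2_mult_T2_eq_sum_gram_XW
    by (intro has_bochner_integral_mult_right has_bochner_integral_sum
        has_bochner_integral_Amat_mult4_gram_XW_mult) auto
  also have "(1 / (real n * sqrt (real n)))\<^sup>2 * (\<Sum>\<nu><m. \<Sum>\<kappa><m. \<Sum>\<nu>'<m. \<Sum>\<kappa>'<m. ?EA \<nu> \<kappa> \<nu>' \<kappa>' *
        (real n ^ 2 * ?S \<nu> \<kappa> * ?S \<nu>' \<kappa>' + real n * ?S \<nu> \<nu>' * ?S \<kappa> \<kappa>'
          + real n * ?S \<nu> \<kappa>' * ?S \<nu>' \<kappa>)) =
      (\<Sum>\<nu><m. \<Sum>\<kappa><m. \<Sum>\<nu>'<m. \<Sum>\<kappa>'<m. ?EA \<nu> \<kappa> \<nu>' \<kappa>' *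
        (real n * Vmat n X \<nu> \<kappa> * Vmat n X \<nu>' \<kappa>'
          + Vmat n X \<nu> \<nu>' * Vmat n X \<kappa> \<kappa>' + Vmat n X \<nu> \<kappa>' * Vmat n X \<nu>' \<kappa>))"
  proof (cases "n = 0")
    case True
    then show ?thesis
      by (simp add: Vmat_def)
  next
    case False
    then have scale: "(1 / (real n * sqrt (real n)))\<^sup>2 * (e * (real n ^ 2 * (real n * v1) * (real n * v2)
          + real n * (real n * v3) * (real n * v4) + real n * (real n * v5) * (real n * v6))) =
        e * (real n * v1 * v2 + v3 * v4 + v5 * v6)" for e v1 v2 v3 v4 v5 v6
      by (simp add: field_simps power2_eq_square)
    show ?thesis
      unfolding sum_distrib_left sum_mult_rows_eq_Vmat scale ..
  qed
  finally show ?thesis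
    by (simp add: has_bochner_integral_iff)
qed

end

theorem lemmaC7:
  fixes M :: "'s measure"
    and X :: "nat \<Rightarrow> nat \<Rightarrow> real"
    and WK WQ W :: "'s \<Rightarrow> nat \<Rightarrow> nat \<Rightarrow> real"
    and m n nk :: nat and \<tau> :: real
    and \<alpha> \<beta> \<delta> \<omega> :: nat
  assumes "prob_space M"
    and "m > 0" and "n > 0" and "\<tau> > 0"
    and "prob_space.indep_vars M (\<lambda>_. borel) (gauss_entry WK WQ W) (gauss_index n nk)"
    and "\<And>e. e \<in> gauss_index n nk \<Longrightarrow>
           distributed M lborel (gauss_entry WK WQ W e) (\<lambda>x. ennreal (std_normal_density x))"
    and "\<alpha> < m" and "\<beta> < m" and "\<delta> < m" and "\<omega> < m"
  shows "((\<integral>s. T2 m n nk \<tau> X (WK s) (WQ s) (W s) \<alpha> \<beta> \<partial>M)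
           = sqrt (real n) * (\<Sum>\<nu><m. \<Sum>\<kappa><m. Vmat n X \<nu> \<kappa> *
               (\<integral>s. Amat m n nk \<tau> X (WK s) (WQ s) \<alpha> \<nu> * Amat m n nk \<tau> X (WK s) (WQ s) \<beta> \<kappa> \<partial>M)))
         \<and> ((\<integral>s. T2 m n nk \<tau> X (WK s) (WQ s) (W s) \<alpha> \<beta> * T2 m n nk \<tau> X (WK s) (WQ s) (W s) \<delta> \<omega> \<partial>M)
           = (\<Sum>\<nu><m. \<Sum>\<kappa><m. \<Sum>\<nu>'<m. \<Sum>\<kappa>'<m.
               (\<integral>s. Amat m n nk \<tau> X (WK s) (WQ s) \<alpha> \<nu> * Amat m n nk \<tau> X (WK s) (WQ s) \<beta> \<kappa>
                   * Amat m n nk \<tau> X (WK s) (WQ s) \<delta> \<nu>' * Amat m n nk \<tau> X (WK s) (WQ s) \<omega> \<kappa>' \<partial>M)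
               * (real n * Vmat n X \<nu> \<kappa> * Vmat n X \<nu>' \<kappa>'
                  + Vmat n X \<nu> \<nu>' * Vmat n X \<kappa> \<kappa>' + Vmat n X \<nu> \<kappa>' * Vmat n X \<nu>' \<kappa>)))"
proof -
  interpret gaussian_attention M WK WQ W n nk
    using assms(1,5,6) by (simp add: gaussian_attention_def gaussian_attention_axioms_def)
  show ?thesis
    using integral_T2 integral_T2_mult by blast
qed

end
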